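(* Let $\Gamma$ be a cocompact torsion-free Fuchsian group, $M=\mathbb{D}^2/\Gamma$, and identify $T_pM$ ($p=\pi(0)$) with $\mathbb{D}^2$ as described in the context. Then for every $i\ge1$, $$\sigma_i=\{z\in\mathbb{D}^2 : \upsilon(z)=i-1\},\qquad \mathbb{D}^2=\sigma_1\cup\mathcal{L},$$ and for every $z\in\mathbb{D}^2$, $$\iota(z)=\#\{\lambda\in\Lambda : \lambda\in D(z,r(z))\},$$ where $D(z,r(z))$ is the open hyperbolic disk of center $z$ and radius $r(z)$.
   Context: $\mathbb{D}^2$ is the open unit disk with the Poincaré metric $d$; $r(z)=d(0,z)$. $\pi:\mathbb{D}^2\to M$ is the quotient map and $\Lambda=\{\gamma(0):\gamma\in\Gamma\}$. For $\lambda\in\Lambda\setminus\{0\}$, $L_\lambda=\{z\in\mathbb{D}^2 : d(z,0)=d(z,\lambda)\}$ (the perpendicular bisector geodesic of $0$ and $\lambda$), and the web of geodesics is $\mathcal{L}=\bigcup_{\lambda\in\Lambda\setminus\{0\}}L_\lambda$. For $z\in\mathbb{D}^2$, $\rho(z)$ is the open geodesic segment from $0$ to $z$, $\iota(z)=\#\{\lambda\in\Lambda\setminus\{0\} : L_\lambda\cap\rho(z)\neq\emptyset\}$ and $\upsilon(z)=\#\{\lambda\in\Lambda\setminus\{0\}: z\in L_\lambda\}$. The exponential map $\exp_p:T_pM\to M$ is a covering isomorphic to $\pi$; we identify $T_pM$ with $\mathbb{D}^2$ so that $v\in T_pM$ corresponds to $z\in\mathbb{D}^2$ with $d(0,z)=|v|$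 and $\exp_p(v)=\pi(z)$ (via the hyperbolic exponential map at $0$). Under this identification the focal index of $z$ is $I(z)=\#\{z'\in\mathbb{D}^2 : \pi(z')=\pi(z),\ d(0,z')=d(0,z)\}$, and $\sigma_i=\{z : I(z)=i\}$ (the focal decomposition of $T_pM$). *)

theory Defs
  imports "HOL-Analysis.Analysis"
begin

definition disk :: "complex set" where
  "disk = {z. cmod z < 1}"

text \<open>Poincare distance on the unit disk (curvature -1).\<close>
definition hdist :: "complex \<Rightarrow> complex \<Rightarrow> real" where
  "hdist z w = arcosh (1 + 2 * (cmod (z - w))\<^sup>2 / ((1 - (cmod z)\<^sup>2) * (1 - (cmod w)\<^sup>2)))"

text \<open>Orientation-preserving isometries of the disk (elements of PSU(1,1)).\<close>
definition disk_aut :: "(complex \<Rightarrow> complex) \<Rightarrow> bool" where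
  "disk_aut f \<longleftrightarrow> (\<exists>a b. (cmod a)\<^sup>2 - (cmod b)\<^sup>2 = 1 \<and>
      f = (\<lambda>z. (a * z + b) / (cnj b * z + cnj a)))"

text \<open>A group of disk automorphisms (group operations checked on the disk).\<close>
definition aut_group :: "(complex \<Rightarrow> complex) set \<Rightarrow> bool" where
  "aut_group G \<longleftrightarrow> (\<forall>g\<in>G. disk_aut g) \<and> id \<in> G \<and>
     (\<forall>g\<in>G. \<forall>h\<in>G. \<exists>k\<in>G. \<forall>z\<in>disk. k z = g (h z)) \<and>
     (\<forall>g\<in>G. \<exists>k\<in>G. \<forall>z\<in>disk. k (g z) = z)"

text \<open>Fuchsian group: a discrete group of disk isometries, i.e. acting properly
  discontinuously on the disk.\<close>
definition fuchsian :: "(complex \<Rightarrow> complex) set \<Rightarrow> bool" where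
  "fuchsian G \<longleftrightarrow> aut_group G \<and>
     (\<forall>K. compact K \<and> K \<subseteq> disk \<longrightarrow> finite {g\<in>G. g ` K \<inter> K \<noteq> {}})"

definition cocompact :: "(complex \<Rightarrow> complex) set \<Rightarrow> bool" where
  "cocompact G \<longleftrightarrow> (\<exists>K. compact K \<and> K \<subseteq> disk \<and> disk \<subseteq> (\<Union>g\<in>G. g ` K))"

text \<open>Torsion-free: no non-identity element (no elliptic element) has a fixed point in the disk.\<close>
definition torsion_free :: "(complex \<Rightarrow> complex) set \<Rightarrow> bool" where
  "torsion_free G \<longleftrightarrow> (\<forall>g\<in>G. (\<exists>z\<in>disk. g z = z) \<longrightarrow> (\<forall>z\<in>disk. g z = z))"

definition Lam :: "(complex \<Rightarrow> complex) set \<Rightarrow> complex set" where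
  "Lam G = {g 0 | g. g \<in> G}"

definition bisector :: "complex \<Rightarrow> complex set" where
  "bisector l = {z \<in> disk. hdist z 0 = hdist z l}"

definition web :: "(complex \<Rightarrow> complex) set \<Rightarrow> complex set" where
  "web G = (\<Union>l \<in> Lam G - {0}. bisector l)"

text \<open>Open geodesic segment from 0 to z (a Euclidean diameter segment in the disk model).\<close>
definition rho :: "complex \<Rightarrow> complex set" where
  "rho z = open_segment 0 z"

definition iota :: "(complex \<Rightarrow> complex) set \<Rightarrow> complex \<Rightarrow> nat" where
  "iota G z = card {l \<in> Lam G - {0}. bisector l \<inter> rho z \<noteq> {}}"

definition upsilon :: "(complex \<Rightarrow> complex) set \<Rightarrow> complex \<Rightarrow> nat" where
  "upsilon G z = card {l \<in> Lam G - {0}. z \<in> bisector l}"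

definition rr :: "complex \<Rightarrow> real" where
  "rr z = hdist 0 z"

text \<open>Focal index: number of points of the disk in the same Gamma-orbit (same fibre of pi)
  and at the same distance from 0.\<close>
definition focal_index :: "(complex \<Rightarrow> complex) set \<Rightarrow> complex \<Rightarrow> nat" where
  "focal_index G z = card {z' \<in> disk. (\<exists>g\<in>G. g z' = z) \<and> hdist 0 z' = hdist 0 z}"

definition sigma :: "(complex \<Rightarrow> complex) set \<Rightarrow> nat \<Rightarrow> complex set" where
  "sigma G i = {z \<in> disk. focal_index G z = i}"

definition hdisk :: "complex \<Rightarrow> real \<Rightarrow> complex set" where
  "hdisk c r = {w \<in> disk. hdist c w < r}"

end

theory Submission
  imports Defs
begin

text \<open>The points of the focal fibre of z are the preimages z' = g\<inverse> z (g \<in> \<Gamma>) with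
  d(0, z') = d(0, z). As g is an isometry, d(0, z') = d(g 0, z), so z' lies in the fibre exactly
  when z lies on the bisector of 0 and \<lambda> = g 0; torsion-freeness makes g, hence \<lambda>, unique.
  Counting \<lambda> = 0 as well gives I(z) = \<upsilon>(z) + 1, and proper discontinuity makes these
  counts finite. The bisector of 0 and \<lambda> meets the segment \<rho>(z) iff 0 and z lie on opposite
  sides of it, i.e. iff d(z, \<lambda>) < d(z, 0) = r(z); in the disk model this is a sign change
  of a quadratic in the parameter of the segment.\<close>

definition moebius :: "complex \<Rightarrow> complex \<Rightarrow> complex \<Rightarrow> complex" where
  "moebius a b z = (a * z + b) / (cnj b * z + cnj a)"

lemma disk_aut_iff: "disk_aut f \<longleftrightarrow> (\<exists>a b. (cmod a)\<^sup>2 - (cmod b)\<^sup>2 = 1 \<and> f = moebius a b)"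
  unfolding disk_aut_def by (simp add: fun_eq_iff moebius_def)

lemma norm_moebius_denom_diff:
  "(cmod (cnj b * u + cnj a))\<^sup>2 - (cmod (a * u + b))\<^sup>2 = ((cmod a)\<^sup>2 - (cmod b)\<^sup>2) * (1 - (cmod u)\<^sup>2)"
  unfolding cmod_power2 by (simp add: algebra_simps power2_eq_square)

lemma moebius_denom_nonzero:
  assumes ab: "(cmod a)\<^sup>2 - (cmod b)\<^sup>2 = 1" and u: "cmod u < 1"
  shows "cnj b * u + cnj a \<noteq> 0"
proof
  assume "cnj b * u + cnj a = 0"
  hence "cmod a = cmod b * cmod u" by (metis add_eq_0_iff complex_mod_cnj norm_minus_cancel norm_mult)
  hence "cmod a \<le> cmod b" using u by (simp add: mult_left_le)
  hence "(cmod a)\<^sup>2 \<le> (cmod b)\<^sup>2" by (simp add: power_mono)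
  thus False using ab by linarith
qed

lemma one_minus_norm_moebius:
  assumes ab: "(cmod a)\<^sup>2 - (cmod b)\<^sup>2 = 1" and u: "cmod u < 1"
  shows "1 - (cmod (moebius a b u))\<^sup>2 = (1 - (cmod u)\<^sup>2) / (cmod (cnj b * u + cnj a))\<^sup>2"
proof -
  have "cmod (cnj b * u + cnj a) \<noteq> 0" using moebius_denom_nonzero[OF ab u] by simp
  hence "1 - (cmod (moebius a b u))\<^sup>2
      = ((cmod (cnj b * u + cnj a))\<^sup>2 - (cmod (a * u + b))\<^sup>2) / (cmod (cnj b * u + cnj a))\<^sup>2"
    by (simp add: moebius_def norm_divide power_divide field_simps)
  thus ?thesis by (simp add: norm_moebius_denom_diff ab)
qed

lemma moebius_in_disk:
  assumes ab: "(cmod a)\<^sup>2 - (cmod b)\<^sup>2 = 1" and u: "u \<in> disk"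
  shows "moebius a b u \<in> disk"
proof -
  have u': "cmod u < 1" using u by (simp add: disk_def)
  have "cmod (cnj b * u + cnj a) \<noteq> 0" using moebius_denom_nonzero[OF ab u'] by simp
  moreover have "(cmod u)\<^sup>2 < 1" using u' by (simp add: abs_square_less_1)
  ultimately have "0 < 1 - (cmod (moebius a b u))\<^sup>2"
    using one_minus_norm_moebius[OF ab u'] by simp
  thus ?thesis by (simp add: disk_def abs_square_less_1)
qed

lemma moebius_diff:
  assumes ab: "(cmod a)\<^sup>2 - (cmod b)\<^sup>2 = 1" and u: "cmod u < 1" and v: "cmod v < 1"
  shows "moebius a b u - moebius a b v = (u - v) / ((cnj b * u + cnj a) * (cnj b * v + cnj a))"
proof -
  have "a * cnj a - b * cnj b = 1"
    using ab by (metis complex_norm_square of_real_1 of_real_diff)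
  moreover have "(a * u + b) * (cnj b * v + cnj a) - (a * v + b) * (cnj b * u + cnj a)
      = (a * cnj a - b * cnj b) * (u - v)"
    by (simp add: algebra_simps)
  ultimately show ?thesis
    using moebius_denom_nonzero[OF ab u] moebius_denom_nonzero[OF ab v]
    by (simp add: moebius_def field_simps)
qed

lemma hdist_moebius:
  assumes ab: "(cmod a)\<^sup>2 - (cmod b)\<^sup>2 = 1" and u: "cmod u < 1" and v: "cmod v < 1"
  shows "hdist (moebius a b u) (moebius a b v) = hdist u v"
proof -
  define du where "du = (cmod (cnj b * u + cnj a))\<^sup>2"
  define dv where "dv = (cmod (cnj b * v + cnj a))\<^sup>2"
  have "du \<noteq> 0" "dv \<noteq> 0"
    using moebius_denom_nonzero[OF ab u] moebius_denom_nonzero[OF ab v] by (auto simp: du_def dv_def)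
  moreover have "(cmod (moebius a b u - moebius a b v))\<^sup>2 = (cmod (u - v))\<^sup>2 / (du * dv)"
    by (simp add: moebius_diff[OF ab u v] du_def dv_def norm_divide norm_mult power_divide
        power_mult_distrib)
  ultimately show ?thesis
    unfolding hdist_def one_minus_norm_moebius[OF ab u] one_minus_norm_moebius[OF ab v]
    by (simp add: du_def[symmetric] dv_def[symmetric])
qed

lemma moebius_moebius_inverse:
  assumes ab: "(cmod a)\<^sup>2 - (cmod b)\<^sup>2 = 1" and u: "cmod u < 1"
  shows "moebius a b (moebius (cnj a) (- b) u) = u"
proof -
  have "cnj (- b) * u + cnj (cnj a) \<noteq> 0"
    using moebius_denom_nonzero[of "cnj a" "- b"] ab u by simp
  hence D: "a - cnj b * u \<noteq> 0" by (simp add: algebra_simps)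
  have e: "a * cnj a - b * cnj b = 1"
    using ab by (metis complex_norm_square of_real_1 of_real_diff)
  have "a * (cnj a * u - b) + b * (a - cnj b * u) = (a * cnj a - b * cnj b) * u"
    "cnj b * (cnj a * u - b) + cnj a * (a - cnj b * u) = a * cnj a - b * cnj b"
    by (simp_all add: algebra_simps)
  moreover have "moebius (cnj a) (- b) u = (cnj a * u - b) / (a - cnj b * u)"
    by (simp add: moebius_def algebra_simps)
  ultimately show ?thesis
    using D e by (simp add: moebius_def field_simps)
qed

lemma hdist_commute: "hdist z w = hdist w z"
  unfolding hdist_def by (simp add: norm_minus_commute mult.commute)

lemma one_le_cosh_hdist:
  assumes "z \<in> disk" "w \<in> disk"
  shows "1 \<le> 1 + 2 * (cmod (z - w))\<^sup>2 / ((1 - (cmod z)\<^sup>2) * (1 - (cmod w)\<^sup>2))"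
proof -
  have "(cmod z)\<^sup>2 < 1" "(cmod w)\<^sup>2 < 1"
    using assms by (simp_all add: disk_def abs_square_less_1)
  thus ?thesis by (intro add_increasing2) (auto intro!: divide_nonneg_pos)
qed

lemma hdist_less_iff:
  assumes "z \<in> disk" "w \<in> disk" "z' \<in> disk" "w' \<in> disk"
  shows "hdist z w < hdist z' w' \<longleftrightarrow>
    (cmod (z - w))\<^sup>2 / ((1 - (cmod z)\<^sup>2) * (1 - (cmod w)\<^sup>2))
      < (cmod (z' - w'))\<^sup>2 / ((1 - (cmod z')\<^sup>2) * (1 - (cmod w')\<^sup>2))"
  unfolding hdist_def
  by (subst arcosh_less_iff_real) (use assms one_le_cosh_hdist in auto)

lemma hdist_eq_iff:
  assumes "z \<in> disk" "w \<in> disk" "z' \<in> disk" "w' \<in> disk"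
  shows "hdist z w = hdist z' w' \<longleftrightarrow>
    (cmod (z - w))\<^sup>2 / ((1 - (cmod z)\<^sup>2) * (1 - (cmod w)\<^sup>2))
      = (cmod (z' - w'))\<^sup>2 / ((1 - (cmod z')\<^sup>2) * (1 - (cmod w')\<^sup>2))"
  using hdist_less_iff[OF assms] hdist_less_iff[of z' w' z w] assms
  by (metis linorder_neq_iff)

lemma origin_disk: "(0::complex) \<in> disk"
  by (simp add: disk_def)

lemma hdist_less_hdist_origin_iff:
  assumes "w \<in> disk" "l \<in> disk"
  shows "hdist w l < hdist w 0 \<longleftrightarrow> (cmod (w - l))\<^sup>2 < (cmod w)\<^sup>2 * (1 - (cmod l)\<^sup>2)"
proof -
  have "(cmod w)\<^sup>2 < 1" "(cmod l)\<^sup>2 < 1"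
    using assms by (simp_all add: disk_def abs_square_less_1)
  thus ?thesis
    using hdist_less_iff[of w l w 0] assms origin_disk by (simp add: divide_simps)
qed

lemma hdist_eq_hdist_origin_iff:
  assumes "w \<in> disk" "l \<in> disk"
  shows "hdist w l = hdist w 0 \<longleftrightarrow> (cmod (w - l))\<^sup>2 = (cmod w)\<^sup>2 * (1 - (cmod l)\<^sup>2)"
proof -
  have "(cmod w)\<^sup>2 < 1" "(cmod l)\<^sup>2 < 1"
    using assms by (simp_all add: disk_def abs_square_less_1)
  thus ?thesis
    using hdist_eq_iff[of w l w 0] assms origin_disk by (simp add: divide_simps)
qed

lemma disk_aut_in_disk: "disk_aut g \<Longrightarrow> u \<in> disk \<Longrightarrow> g u \<in> disk"
  unfolding disk_aut_iff using moebius_in_disk by blast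

lemma hdist_disk_aut:
  "disk_aut g \<Longrightarrow> u \<in> disk \<Longrightarrow> v \<in> disk \<Longrightarrow> hdist (g u) (g v) = hdist u v"
  unfolding disk_aut_iff disk_def using hdist_moebius by auto

lemma disk_aut_surj:
  assumes "disk_aut g" "u \<in> disk"
  shows "\<exists>x\<in>disk. g x = u"
proof -
  obtain a b where ab: "(cmod a)\<^sup>2 - (cmod b)\<^sup>2 = 1" and g: "g = moebius a b"
    using assms(1) unfolding disk_aut_iff by blast
  have "(cmod (cnj a))\<^sup>2 - (cmod (- b))\<^sup>2 = 1" using ab by simp
  thus ?thesis
    using moebius_in_disk moebius_moebius_inverse[OF ab] assms(2) g by (metis disk_def mem_Collect_eq)
qed

lemma aut_group_inverse:
  assumes "aut_group G" "g \<in> G"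
  obtains k where "k \<in> G" "\<forall>z\<in>disk. k (g z) = z" "\<forall>z\<in>disk. g (k z) = z"
proof -
  obtain k where k: "k \<in> G" "\<forall>z\<in>disk. k (g z) = z"
    using assms unfolding aut_group_def by blast
  have "disk_aut g" using assms unfolding aut_group_def by blast
  hence "\<forall>z\<in>disk. g (k z) = z" using disk_aut_surj k(2) by fastforce
  with k that show ?thesis by blast
qed

lemma aut_group_in_disk: "aut_group G \<Longrightarrow> g \<in> G \<Longrightarrow> u \<in> disk \<Longrightarrow> g u \<in> disk"
  unfolding aut_group_def by (blast intro: disk_aut_in_disk)

lemma Lam_subset_disk: "aut_group G \<Longrightarrow> Lam G \<subseteq> disk"
  unfolding Lam_def using aut_group_in_disk origin_disk by blast

lemma zero_in_Lam: "aut_group G \<Longrightarrow> 0 \<in> Lam G"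
  unfolding Lam_def aut_group_def by (metis (mono_tags, lifting) id_apply mem_Collect_eq)

lemma torsion_free_eq_on_disk:
  assumes G: "aut_group G" "torsion_free G" and g: "g \<in> G" and h: "h \<in> G"
    and w: "w \<in> disk" "g w = h w" and v: "v \<in> disk"
  shows "g v = h v"
proof -
  obtain k where k: "k \<in> G" "\<forall>z\<in>disk. k (h z) = z" "\<forall>z\<in>disk. h (k z) = z"
    by (rule aut_group_inverse[OF G(1) h])
  obtain m where m: "m \<in> G" "\<forall>z\<in>disk. m z = k (g z)"
    using G(1) k(1) g unfolding aut_group_def by blast
  have "m w = w" using m k w by auto
  hence "m v = v" using G(2) m(1) w v unfolding torsion_free_def by blast
  thus ?thesis using m k v aut_group_in_disk[OF G(1) g v] by metis
qed

text \<open>2|z|/(1 + |z|^2) is the Euclidean radius of the hyperbolic disk about 0 of radius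
  2 r(z), which contains every \<lambda> whose bisector passes through z.\<close>

lemma bisector_norm_bound:
  assumes z: "cmod z \<le> 1" and l: "(cmod (z - l))\<^sup>2 = (cmod z)\<^sup>2 * (1 - (cmod l)\<^sup>2)"
  shows "cmod l \<le> 2 * cmod z / (1 + (cmod z)\<^sup>2)"
proof (cases "cmod l \<le> cmod z")
  case True
  have "cmod l * (1 + (cmod z)\<^sup>2) \<le> cmod z * (1 + (cmod z)\<^sup>2)"
    using True by (intro mult_right_mono) auto
  also have "\<dots> \<le> 2 * cmod z"
    using z by (simp add: mult_left_le power_le_one algebra_simps)
  finally show ?thesis by (simp add: field_simps add_pos_nonneg)
next
  case False
  have "cmod l - cmod z \<le> cmod (z - l)"
    using norm_triangle_ineq2[of l z] by (simp add: norm_minus_commute)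
  hence "(cmod l - cmod z)\<^sup>2 \<le> (cmod z)\<^sup>2 * (1 - (cmod l)\<^sup>2)"
    using False l power_mono[of "cmod l - cmod z" "cmod (z - l)" 2] by simp
  hence "cmod l * (cmod l * (1 + (cmod z)\<^sup>2)) \<le> cmod l * (2 * cmod z)"
    by (simp add: power2_eq_square algebra_simps)
  hence "cmod l * (1 + (cmod z)\<^sup>2) \<le> 2 * cmod z"
    using False by (cases "l = 0") (auto simp: mult_le_cancel_left)
  thus ?thesis by (simp add: field_simps add_pos_nonneg)
qed

lemma finite_bisectors_through:
  assumes F: "fuchsian G" and z: "z \<in> disk"
  shows "finite {l \<in> Lam G. z \<in> bisector l}"
proof -
  define r :: real where "r = 2 * cmod z / (1 + (cmod z)\<^sup>2)"
  have "0 < (1 - cmod z)\<^sup>2" using z by (simp add: disk_def)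
  hence "r < 1" unfolding r_def by (simp add: field_simps power2_eq_square add_pos_nonneg)
  hence "compact (cball (0::complex) r)" "cball (0::complex) r \<subseteq> disk" by (auto simp: disk_def)
  hence fin: "finite {g\<in>G. g ` cball 0 r \<inter> cball 0 r \<noteq> {}}"
    using F unfolding fuchsian_def by blast
  have "{l \<in> Lam G. z \<in> bisector l} \<subseteq> (\<lambda>g. g 0) ` {g\<in>G. g ` cball 0 r \<inter> cball 0 r \<noteq> {}}"
  proof
    fix l assume l: "l \<in> {l \<in> Lam G. z \<in> bisector l}"
    then obtain g where g: "g \<in> G" "l = g 0" unfolding Lam_def by blast
    have "l \<in> disk" using l Lam_subset_disk F by (auto simp: fuchsian_def)
    hence "(cmod (z - l))\<^sup>2 = (cmod z)\<^sup>2 * (1 - (cmod l)\<^sup>2)"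
      using l z hdist_eq_hdist_origin_iff[of z l] by (simp add: bisector_def)
    hence "l \<in> cball 0 r"
      using z bisector_norm_bound[of z l] by (simp add: r_def disk_def)
    moreover have "0 \<in> cball 0 r" using \<open>r < 1\<close> r_def by simp
    ultimately show "l \<in> (\<lambda>g. g 0) ` {g\<in>G. g ` cball 0 r \<inter> cball 0 r \<noteq> {}}" using g by blast
  qed
  thus ?thesis using fin by (rule finite_subset[OF _ finite_imageI])
qed

lemma equidistant_preimage_iff_bisector:
  assumes "aut_group G" "g \<in> G" "z' \<in> disk"
  shows "hdist 0 z' = hdist 0 (g z') \<longleftrightarrow> g z' \<in> bisector (g 0)"
proof -
  have "hdist 0 z' = hdist (g z') (g 0)"
    using assms hdist_disk_aut[of g 0 z'] origin_disk
    by (simp add: aut_group_def hdist_commute)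
  thus ?thesis
    using assms aut_group_in_disk by (auto simp: bisector_def hdist_commute)
qed

lemma focal_index_eq_card_bisectors:
  assumes AG: "aut_group G" and TF: "torsion_free G" and z: "z \<in> disk"
  shows "focal_index G z = card {l \<in> Lam G. z \<in> bisector l}"
proof -
  define A where "A = {z' \<in> disk. (\<exists>g\<in>G. g z' = z) \<and> hdist 0 z' = hdist 0 z}"
  define B where "B = {l \<in> Lam G. z \<in> bisector l}"
  \<comment> \<open>by torsion-freeness the choice of g does not affect g 0\<close>
  define \<phi> where "\<phi> z' = (SOME g. g \<in> G \<and> g z' = z) 0" for z'
  have \<phi>: "\<exists>g\<in>G. g z' = z \<and> \<phi> z' = g 0" if "z' \<in> A" for z'
  proof -
    have "\<exists>g. g \<in> G \<and> g z' = z" using that unfolding A_def by blast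
    from someI_ex[OF this] show ?thesis unfolding \<phi>_def by blast
  qed
  have "inj_on \<phi> A"
  proof (rule inj_onI)
    fix z1 z2 assume z1: "z1 \<in> A" and z2: "z2 \<in> A" and eq: "\<phi> z1 = \<phi> z2"
    obtain g1 where g1: "g1 \<in> G" "g1 z1 = z" "\<phi> z1 = g1 0" using \<phi>[OF z1] by blast
    obtain g2 where g2: "g2 \<in> G" "g2 z2 = z" "\<phi> z2 = g2 0" using \<phi>[OF z2] by blast
    have d: "z1 \<in> disk" "z2 \<in> disk" using z1 z2 by (simp_all add: A_def)
    have "g1 z2 = g2 z2"
      using torsion_free_eq_on_disk[OF AG TF g1(1) g2(1) origin_disk _ d(2)] eq g1(3) g2(3) by simp
    hence "g1 z2 = g1 z1" using g1(2) g2(2) by simp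
    moreover obtain k where "k \<in> G" "\<forall>u\<in>disk. k (g1 u) = u" "\<forall>u\<in>disk. g1 (k u) = u"
      by (rule aut_group_inverse[OF AG g1(1)])
    ultimately show "z1 = z2" using d by metis
  qed
  moreover have "\<phi> ` A = B"
  proof
    show "\<phi> ` A \<subseteq> B"
    proof
      fix l assume "l \<in> \<phi> ` A"
      then obtain z' g where z': "z' \<in> A" and g: "g \<in> G" "g z' = z" "l = g 0" using \<phi> by blast
      hence "z \<in> bisector l"
        using equidistant_preimage_iff_bisector[OF AG g(1), of z'] by (simp add: A_def)
      moreover have "l \<in> Lam G" using g unfolding Lam_def by blast
      ultimately show "l \<in> B" unfolding B_def by blast
    qed
  next
    show "B \<subseteq> \<phi> ` A"
    proof
      fix l assume "l \<in> B"
      then obtain g where g: "g \<in> G" "l = g 0" and "z \<in> bisector (g 0)"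
        unfolding B_def Lam_def by blast
      obtain k where k: "k \<in> G" "\<forall>u\<in>disk. k (g u) = u" "\<forall>u\<in>disk. g (k u) = u"
        by (rule aut_group_inverse[OF AG g(1)])
      have gz: "g (k z) = z" using k(3) z by blast
      have kz: "k z \<in> disk" using aut_group_in_disk[OF AG k(1) z] .
      have "hdist 0 (k z) = hdist 0 z"
        using equidistant_preimage_iff_bisector[OF AG g(1) kz] \<open>z \<in> bisector (g 0)\<close> gz by simp
      hence kA: "k z \<in> A" using kz gz g(1) unfolding A_def by blast
      obtain h where "h \<in> G" "h (k z) = z" "\<phi> (k z) = h 0" using \<phi>[OF kA] by blast
      hence "\<phi> (k z) = l"
        using torsion_free_eq_on_disk[OF AG TF _ g(1) kz _ origin_disk] gz g(2) by simp
      thus "l \<in> \<phi> ` A" using kA by blast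
    qed
  qed
  ultimately have "card A = card B" by (metis card_image)
  thus ?thesis unfolding focal_index_def A_def B_def .
qed

lemma focal_index_eq_Suc_upsilon:
  assumes F: "fuchsian G" and TF: "torsion_free G" and z: "z \<in> disk"
  shows "focal_index G z = Suc (upsilon G z)"
proof -
  have AG: "aut_group G" using F unfolding fuchsian_def by blast
  have "0 \<in> {l \<in> Lam G. z \<in> bisector l}"
    using zero_in_Lam[OF AG] z by (simp add: bisector_def)
  moreover have "{l \<in> Lam G - {0}. z \<in> bisector l} = {l \<in> Lam G. z \<in> bisector l} - {0}" by blast
  ultimately show ?thesis
    unfolding focal_index_eq_card_bisectors[OF AG TF z] upsilon_def
    using card_Suc_Diff1[OF finite_bisectors_through[OF F z]] by simp
qed

lemma quadratic_root_in_unit_interval_iff: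
  fixes A B C :: real
  assumes A: "0 \<le> A" "A < C"
  shows "(\<exists>t. 0 < t \<and> t < 1 \<and> A * t\<^sup>2 - 2 * B * t + C = 0) \<longleftrightarrow> A - 2 * B + C < 0"
proof
  assume "\<exists>t. 0 < t \<and> t < 1 \<and> A * t\<^sup>2 - 2 * B * t + C = 0"
  then obtain t where t: "0 < t" "t < 1" "A * t\<^sup>2 - 2 * B * t + C = 0" by blast
  have "(A - 2 * B + C) * t - (1 - t) * (A * t - C) = A * t\<^sup>2 - 2 * B * t + C"
    by (simp add: algebra_simps power2_eq_square)
  hence "(A - 2 * B + C) * t = (1 - t) * (A * t - C)" using t(3) by simp
  moreover have "A * t \<le> A" using t A by (simp add: mult_left_le)
  hence "(1 - t) * (A * t - C) < 0" using t A by (intro mult_pos_neg) auto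
  ultimately have "(A - 2 * B + C) * t < 0" by simp
  thus "A - 2 * B + C < 0" using t(1) by (simp add: mult_less_0_iff)
next
  assume neg: "A - 2 * B + C < 0"
  let ?q = "\<lambda>t::real. A * t\<^sup>2 - 2 * B * t + C"
  have "continuous_on {0..1} ?q" by (intro continuous_intros)
  moreover have "?q 1 \<le> 0" "0 \<le> ?q 0" using neg A by simp_all
  ultimately obtain t where t: "t \<in> {0..1}" "?q t = 0" using IVT2'[of ?q 1 0 0] by auto
  moreover have "t \<noteq> 0" "t \<noteq> 1" using t neg A by auto
  ultimately have "0 < t" "t < 1" by auto
  with t show "\<exists>t. 0 < t \<and> t < 1 \<and> ?q t = 0" by blast
qed

lemma bisector_meets_rho_iff:
  assumes z: "z \<in> disk" and l: "l \<in> disk" "l \<noteq> 0"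
  shows "bisector l \<inter> rho z \<noteq> {} \<longleftrightarrow> hdist z l < hdist 0 z"
proof -
  define A where "A = (cmod z)\<^sup>2 * (cmod l)\<^sup>2"
  define B where "B = Re z * Re l + Im z * Im l"
  define C where "C = (cmod l)\<^sup>2"
  \<comment> \<open>the sign of this quadratic tells on which side of the bisector t z lies\<close>
  have quadratic: "(cmod (t *\<^sub>R z - l))\<^sup>2 - (cmod (t *\<^sub>R z))\<^sup>2 * (1 - (cmod l)\<^sup>2) = A * t\<^sup>2 - 2 * B * t + C"
    for t :: real
    unfolding A_def B_def C_def cmod_power2 by (simp add: algebra_simps power2_eq_square)
  have "(cmod z)\<^sup>2 < 1" using z by (simp add: disk_def abs_square_less_1)
  hence AC: "0 \<le> A" "A < C" using l(2) by (simp_all add: A_def C_def)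
  have tz: "t *\<^sub>R z \<in> disk" if "0 < t" "t < 1" for t :: real
    using z that mult_left_le_one_le[of "cmod z" t] by (simp add: disk_def)
  have "bisector l \<inter> rho z \<noteq> {} \<longleftrightarrow> z \<noteq> 0 \<and> (\<exists>t. 0 < t \<and> t < 1 \<and> t *\<^sub>R z \<in> bisector l)"
    unfolding rho_def by (auto simp: in_segment)
  also have "\<dots> \<longleftrightarrow> z \<noteq> 0 \<and> (\<exists>t. 0 < t \<and> t < 1 \<and> A * t\<^sup>2 - 2 * B * t + C = 0)"
  proof -
    have "t *\<^sub>R z \<in> bisector l \<longleftrightarrow> A * t\<^sup>2 - 2 * B * t + C = 0" if "0 < t" "t < 1" for t
      using hdist_eq_hdist_origin_iff[OF tz[OF that] l(1)] tz[OF that] quadratic[of t]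
      by (auto simp: bisector_def)
    thus ?thesis by blast
  qed
  also have "\<dots> \<longleftrightarrow> A - 2 * B + C < 0"
  proof -
    have "z = 0 \<Longrightarrow> \<not> A - 2 * B + C < 0" using AC by (simp add: A_def B_def)
    thus ?thesis using quadratic_root_in_unit_interval_iff[OF AC, of B] by blast
  qed
  also have "\<dots> \<longleftrightarrow> hdist z l < hdist 0 z"
    using hdist_less_hdist_origin_iff[OF z l(1)] quadratic[of 1] hdist_commute[of 0 z] by auto
  finally show ?thesis .
qed

lemma iota_eq_card_Lam_in_hdisk:
  assumes AG: "aut_group G" and z: "z \<in> disk"
  shows "iota G z = card {l \<in> Lam G. l \<in> hdisk z (rr z)}"
proof -
  have "l \<noteq> 0" if "hdist z l < hdist 0 z" for l
    using that by (auto simp: hdist_commute)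
  hence "{l \<in> Lam G - {0}. bisector l \<inter> rho z \<noteq> {}} = {l \<in> Lam G. l \<in> hdisk z (rr z)}"
    using bisector_meets_rho_iff[OF z] Lam_subset_disk[OF AG] by (auto simp: hdisk_def rr_def)
  thus ?thesis unfolding iota_def by simp
qed

theorem lemma1:
  fixes G :: "(complex \<Rightarrow> complex) set"
  assumes "fuchsian G" and "cocompact G" and "torsion_free G"
  shows "(\<forall>i::nat. i \<ge> 1 \<longrightarrow> sigma G i = {z \<in> disk. upsilon G z = i - 1})
    \<and> disk = sigma G 1 \<union> web G
    \<and> (\<forall>z\<in>disk. iota G z = card {l \<in> Lam G. l \<in> hdisk z (rr z)})"
proof (intro conjI)
  have AG: "aut_group G" using assms(1) unfolding fuchsian_def by blast
  have focal: "focal_index G z = Suc (upsilon G z)" if "z \<in> disk" for z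
    using focal_index_eq_Suc_upsilon[OF assms(1) assms(3) that] .
  show "\<forall>i::nat. i \<ge> 1 \<longrightarrow> sigma G i = {z \<in> disk. upsilon G z = i - 1}"
    unfolding sigma_def using focal by auto
  have "upsilon G z = 0" if "z \<notin> web G" for z
  proof -
    have "{l \<in> Lam G - {0}. z \<in> bisector l} = {}" using that unfolding web_def by blast
    thus ?thesis unfolding upsilon_def by (metis card.empty)
  qed
  thus "disk = sigma G 1 \<union> web G"
    unfolding sigma_def using focal by (auto simp: web_def bisector_def)
  show "\<forall>z\<in>disk. iota G z = card {l \<in> Lam G. l \<in> hdisk z (rr z)}"
    using iota_eq_card_Lam_in_hdisk[OF AG] by blast
qed

end
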